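(* Fix $\delta>0$ and privacy levels $\epsilon_1,\dots,\epsilon_n>0$. Let $\mathcal{P}=\{(s,c,q): s\in(0,2),\ c>0,\ q\in(|s-1|,1)\}$ and $$J(\{s_i,c_i,q_i\}_{i=1}^n)=\frac{2}{n^2}\sum_{i=1}^n\frac{s_i^2c_i^2}{1-q_i^2}.$$ Then the infimum of $J$ over all $\{(s_i,c_i,q_i)\}_{i=1}^n\in\mathcal{P}^n$ satisfying the privacy constraints $\epsilon_i=\delta\frac{q_i}{c_i(q_i-|s_i-1|)}$ for all $i$ (equivalently $c_i=\delta\frac{q_i}{\epsilon_i(q_i-|s_i-1|)}$) equals $$J^*=\frac{2\delta^2}{n^2}\sum_{i=1}^n\frac{1}{\epsilon_i^2}.$$ This infimum is not attained on the constraint set, and it is approached by taking $s_i=1$, $c_i=\delta q_i/(\epsilon_i(q_i-|s_i-1|))$, and $q_i\to0$ for all $i$.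
   Context: $J$ equals the variance of the consensus point $\theta_\infty$ of the Laplacian differentially private consensus algorithm $\theta(k+1)=\theta(k)-hLx(k)+S\eta(k)$, $x(k)=\theta(k)+\eta(k)$, $S=\mathrm{diag}(s_i)$, $\eta_i(k)\sim\mathrm{Lap}(c_iq_i^k)$ independent, and $\epsilon_i=\delta q_i/(c_i(q_i-|s_i-1|))$ is the differential privacy level of agent $i$ for adjacency bound $\delta$. *)

theory Defs
  imports Complex_Main
begin

text \<open>Agents are indexed by i < n; parameter families are functions nat \<Rightarrow> real,
  only their values at i < n matter.\<close>

definition J :: "nat \<Rightarrow> (nat \<Rightarrow> real) \<Rightarrow> (nat \<Rightarrow> real) \<Rightarrow> (nat \<Rightarrow> real) \<Rightarrow> real" where
  "J n s c q = 2 / (real n)^2 * (\<Sum>i<n. (s i)^2 * (c i)^2 / (1 - (q i)^2))"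

definition feasible :: "nat \<Rightarrow> real \<Rightarrow> (nat \<Rightarrow> real) \<Rightarrow> (nat \<Rightarrow> real) \<Rightarrow> (nat \<Rightarrow> real) \<Rightarrow> (nat \<Rightarrow> real) \<Rightarrow> bool" where
  "feasible n \<delta> \<epsilon> s c q \<longleftrightarrow>
     (\<forall>i<n. 0 < s i \<and> s i < 2 \<and> 0 < c i \<and> \<bar>s i - 1\<bar> < q i \<and> q i < 1 \<and>
            \<epsilon> i = \<delta> * q i / (c i * (q i - \<bar>s i - 1\<bar>)))"

definition Jstar :: "nat \<Rightarrow> real \<Rightarrow> (nat \<Rightarrow> real) \<Rightarrow> real" where
  "Jstar n \<delta> \<epsilon> = 2 * \<delta>^2 / (real n)^2 * (\<Sum>i<n. 1 / (\<epsilon> i)^2)"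

end

theory Submission
  imports Defs
begin

text \<open>With \<open>a = \<bar>s - 1\<bar>\<close>, the privacy constraint says \<open>\<delta> / \<epsilon> = c (q - a) / q\<close>, so each summand of
  \<open>J\<close> exceeds its counterpart in \<open>J\<^sup>*\<close> iff \<open>(q - a)\<^sup>2 (1 - q\<^sup>2) < s\<^sup>2 q\<^sup>2\<close>. This holds because
  \<open>s \<ge> 1 - a\<close> gives \<open>s q \<ge> q - a q \<ge> q - a > 0\<close> and \<open>1 - q\<^sup>2 < 1\<close>.\<close>

lemma privacy_constraint_ratio:
  fixes \<delta> e c q a :: real
  assumes "e = \<delta> * q / (c * (q - a))" and "\<delta> > 0" and "c > 0" and "q > 0" and "a < q"
  shows "\<delta>^2 / e^2 = c^2 * (q - a)^2 / q^2"
proof -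
  have "\<delta> / e = c * (q - a) / q" using assms unfolding assms(1) by (simp add: field_simps)
  then show ?thesis by (metis power_divide power_mult_distrib)
qed

lemma privacy_summand_lower_bound:
  fixes s c q e \<delta> :: real
  assumes "0 < s" and "c > 0" and "\<bar>s - 1\<bar> < q" and "q < 1"
    and constraint: "e = \<delta> * q / (c * (q - \<bar>s - 1\<bar>))" and "\<delta> > 0"
  shows "\<delta>^2 / e^2 < s^2 * c^2 / (1 - q^2)"
proof -
  define a where "a = \<bar>s - 1\<bar>"
  have "a \<ge> 0" "a < q" "s \<ge> 1 - a" using assms(3) by (auto simp: a_def)
  then have "q > 0" by linarith
  have "q - a \<le> (1 - a) * q" using \<open>a \<ge> 0\<close> \<open>q < 1\<close> by (simp add: algebra_simps mult_left_le)
  also have "\<dots> \<le> s * q" using \<open>s \<ge> 1 - a\<close> \<open>q > 0\<close> by (simp add: mult_right_mono)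
  finally have "(q - a)^2 \<le> (s * q)^2" using \<open>a < q\<close> by (simp add: power_mono)
  moreover have "(q - a)^2 * (1 - q^2) < (q - a)^2" using \<open>a < q\<close> \<open>q > 0\<close> by simp
  ultimately have "c^2 * ((q - a)^2 * (1 - q^2)) < c^2 * (s^2 * q^2)"
    using \<open>c > 0\<close> by (simp add: power_mult_distrib)
  moreover have "1 - q^2 > 0" using \<open>q > 0\<close> \<open>q < 1\<close> by (simp add: abs_square_less_1)
  ultimately have "c^2 * (q - a)^2 / q^2 < s^2 * c^2 / (1 - q^2)"
    using \<open>q > 0\<close> by (simp add: field_simps)
  with privacy_constraint_ratio show ?thesis
    using assms \<open>q > 0\<close> \<open>a < q\<close> by (simp add: a_def)
qed

lemma Jstar_eq_sum:
  "Jstar n \<delta> \<epsilon> = 2 / (real n)^2 * (\<Sum>i<n. \<delta>^2 / (\<epsilon> i)^2)"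
  unfolding Jstar_def by (simp add: sum_distrib_left)

lemma Jstar_less_J:
  assumes "n \<ge> 1" and "\<delta> > 0" and "feasible n \<delta> \<epsilon> s c q"
  shows "Jstar n \<delta> \<epsilon> < J n s c q"
proof -
  have "(\<Sum>i<n. \<delta>^2 / (\<epsilon> i)^2) < (\<Sum>i<n. (s i)^2 * (c i)^2 / (1 - (q i)^2))"
  proof (rule sum_strict_mono)
    fix i assume "i \<in> {..<n}"
    then show "\<delta>^2 / (\<epsilon> i)^2 < (s i)^2 * (c i)^2 / (1 - (q i)^2)"
      using assms(2,3) unfolding feasible_def by (intro privacy_summand_lower_bound) auto
  qed (use assms(1) in \<open>auto simp: lessThan_empty_iff\<close>)
  then show ?thesis using assms(1) unfolding J_def Jstar_eq_sum by (simp add: divide_strict_right_mono)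
qed

abbreviation unit_gain_c :: "real \<Rightarrow> (nat \<Rightarrow> real) \<Rightarrow> (nat \<Rightarrow> real) \<Rightarrow> nat \<Rightarrow> real" where
  "unit_gain_c \<delta> \<epsilon> q \<equiv> \<lambda>i. \<delta> * q i / (\<epsilon> i * (q i - \<bar>1 - 1\<bar>))"

lemma feasible_unit_gain:
  assumes "\<delta> > 0" and "\<forall>i<n. \<epsilon> i > 0" and "\<forall>i<n. 0 < q i \<and> q i < 1"
  shows "feasible n \<delta> \<epsilon> (\<lambda>i. 1) (unit_gain_c \<delta> \<epsilon> q) q"
  using assms unfolding feasible_def by (auto simp: field_simps)

lemma J_unit_gain:
  assumes "\<forall>i<n. 0 < q i"
  shows "J n (\<lambda>i. 1) (unit_gain_c \<delta> \<epsilon> q) q = 2 / (real n)^2 * (\<Sum>i<n. (\<delta> / \<epsilon> i)^2 / (1 - (q i)^2))"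
  unfolding J_def using assms by (intro arg_cong[where f="\<lambda>x. 2 / (real n)^2 * x"] sum.cong) auto

lemma J_unit_gain_tendsto_Jstar:
  assumes "\<forall>k. \<forall>i<n. 0 < Q k i" and "\<forall>i<n. (\<lambda>k. Q k i) \<longlonglongrightarrow> 0"
  shows "(\<lambda>k. J n (\<lambda>i. 1) (unit_gain_c \<delta> \<epsilon> (Q k)) (Q k)) \<longlonglongrightarrow> Jstar n \<delta> \<epsilon>"
proof -
  have "(\<lambda>k. 2 / (real n)^2 * (\<Sum>i<n. (\<delta> / \<epsilon> i)^2 / (1 - (Q k i)^2)))
      \<longlonglongrightarrow> 2 / (real n)^2 * (\<Sum>i<n. (\<delta> / \<epsilon> i)^2 / (1 - 0^2))"
    using assms(2) by (intro tendsto_intros tendsto_sum) auto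
  moreover have "J n (\<lambda>i. 1) (unit_gain_c \<delta> \<epsilon> (Q k)) (Q k)
      = 2 / (real n)^2 * (\<Sum>i<n. (\<delta> / \<epsilon> i)^2 / (1 - (Q k i)^2))" for k
    using assms(1) by (intro J_unit_gain) auto
  ultimately show ?thesis by (simp add: Jstar_eq_sum power_divide)
qed

lemma cInf_eq_tendsto_lower_bound:
  fixes S :: "real set" and x :: "nat \<Rightarrow> real"
  assumes "\<And>y. y \<in> S \<Longrightarrow> L \<le> y" and "\<And>k. x k \<in> S" and "x \<longlonglongrightarrow> L"
  shows "Inf S = L"
proof (rule antisym)
  have "bdd_below S" using assms(1) by (rule bdd_belowI)
  then have "\<And>k. Inf S \<le> x k" using assms(2) by (intro cInf_lower)
  then show "Inf S \<le> L" using assms(3) by (intro LIMSEQ_le_const[of x]) auto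
  show "L \<le> Inf S" using assms(1,2) by (intro cInf_greatest) auto
qed

lemma inverse_shift_tendsto_zero: "(\<lambda>k. 1 / (real k + 2)) \<longlonglongrightarrow> 0"
  using LIMSEQ_ignore_initial_segment[OF lim_const_over_n[of 1], of 2] by (simp add: add.commute)

theorem mainTheorem7:
  fixes n :: nat and \<delta> :: real and \<epsilon> :: "nat \<Rightarrow> real"
  assumes "n \<ge> 1" and "\<delta> > 0" and "\<forall>i<n. \<epsilon> i > 0"
  shows "Inf ((\<lambda>(s, c, q). J n s c q) ` {(s, c, q). feasible n \<delta> \<epsilon> s c q}) = Jstar n \<delta> \<epsilon>
       \<and> (\<forall>s c q. feasible n \<delta> \<epsilon> s c q \<longrightarrow> J n s c q \<noteq> Jstar n \<delta> \<epsilon>)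
       \<and> (\<forall>Q :: nat \<Rightarrow> nat \<Rightarrow> real.
            (\<forall>k. \<forall>i<n. 0 < Q k i \<and> Q k i < 1) \<and> (\<forall>i<n. (\<lambda>k. Q k i) \<longlonglongrightarrow> 0) \<longrightarrow>
            (\<forall>k. feasible n \<delta> \<epsilon> (\<lambda>i. 1) (\<lambda>i. \<delta> * Q k i / (\<epsilon> i * (Q k i - \<bar>1 - 1\<bar>))) (Q k)) \<and>
            (\<lambda>k. J n (\<lambda>i. 1) (\<lambda>i. \<delta> * Q k i / (\<epsilon> i * (Q k i - \<bar>1 - 1\<bar>))) (Q k))
               \<longlonglongrightarrow> Jstar n \<delta> \<epsilon>)"
  (is "?inf \<and> ?strict \<and> ?approach")
proof -
  have ?strict using Jstar_less_J[OF assms(1,2)] by (metis less_irrefl)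
  moreover have ?approach
    using feasible_unit_gain[OF assms(2,3)] J_unit_gain_tendsto_Jstar by blast
  moreover have ?inf
  proof (rule cInf_eq_tendsto_lower_bound)
    define Q :: "nat \<Rightarrow> nat \<Rightarrow> real" where "Q = (\<lambda>k i. 1 / (real k + 2))"
    have Q: "\<forall>k. \<forall>i<n. 0 < Q k i \<and> Q k i < 1" unfolding Q_def by auto
    show "(\<lambda>k. J n (\<lambda>i. 1) (unit_gain_c \<delta> \<epsilon> (Q k)) (Q k)) \<longlonglongrightarrow> Jstar n \<delta> \<epsilon>"
      using Q inverse_shift_tendsto_zero by (intro J_unit_gain_tendsto_Jstar) (auto simp: Q_def)
    show "J n (\<lambda>i. 1) (unit_gain_c \<delta> \<epsilon> (Q k)) (Q k)
          \<in> (\<lambda>(s, c, q). J n s c q) ` {(s, c, q). feasible n \<delta> \<epsilon> s c q}" for k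
      using feasible_unit_gain[OF assms(2,3)] Q by force
  qed (use Jstar_less_J[OF assms(1,2)] in \<open>auto intro: less_imp_le\<close>)
  ultimately show ?thesis by blast
qed

end
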